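(* Let $n\ge2$. There exist polynomials $p_1,\dots,p_{n-1}\in\mathbb{C}[x,y]$ in the variables $(x,y)\in\mathbb{C}^n\times\mathbb{C}^{n-1}$ such that, if $B(x,y)$ denotes the $n\times n$ matrix whose first row is $(x_1,p_1(x,y),\dots,p_{n-1}(x,y))$, whose first column is $(x_1,1,0,\dots,0)^T$, and whose lower-right $(n-1)\times(n-1)$ block is the matrix with $1$'s on the subdiagonal, last column $\big((-1)^ny_{n-1},(-1)^{n-1}y_{n-2},\dots,(-1)^3y_2,y_1\big)^T$ (i.e. entry $(-1)^{n-i+1}y_{n-i}$ in its $i$-th row) and all other entries $0$, then for every $(x,y)$ and every $j=2,\dots,n$, \[ \sum_{I\in\mathscr{I}^j:\,i_1=1}\det\big(B(x,y)_I\big)=x_j. \] Moreover, for fixed $(x,y)$, the numbers $p_1(x,y),\dots,p_{n-1}(x,y)$ are the unique complex numbers placed in positions $(1,2),\dots,(1,n)$ of such a matrix (with the other entries as described) for which these $n-1$ equations hold.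
   Context: $\mathscr{I}^j$ denotes the set of increasing $j$-tuples $I=(i_1<\dots<i_j)$ in $\{1,\dots,n\}$; for a matrix $A$, $A_I$ is the principal submatrix with rows and columns indexed by $I$. *)

theory Defs
  imports Complex_Main "Jordan_Normal_Form.Determinant" "Jordan_Normal_Form.DL_Submatrix"
begin

text \<open>Over the infinite field C, polynomial functions and polynomials coincide.\<close>
inductive poly_xy :: "nat \<Rightarrow> ((nat \<Rightarrow> complex) \<Rightarrow> (nat \<Rightarrow> complex) \<Rightarrow> complex) \<Rightarrow> bool"
  for n :: nat where
  const: "poly_xy n (\<lambda>x y. c)"
| var_x: "1 \<le> i \<Longrightarrow> i \<le> n \<Longrightarrow> poly_xy n (\<lambda>x y. x i)"
| var_y: "1 \<le> i \<Longrightarrow> i \<le> n - 1 \<Longrightarrow> poly_xy n (\<lambda>x y. y i)"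
| add: "poly_xy n p \<Longrightarrow> poly_xy n q \<Longrightarrow> poly_xy n (\<lambda>x y. p x y + q x y)"
| mult: "poly_xy n p \<Longrightarrow> poly_xy n q \<Longrightarrow> poly_xy n (\<lambda>x y. p x y * q x y)"

text \<open>The n x n matrix B (0-based indices in the JNF matrix; paper entry (r,s)
  is stored at (r-1,s-1)). c k is the entry in paper position (1,k+1).\<close>
definition Bmat :: "nat \<Rightarrow> (nat \<Rightarrow> complex) \<Rightarrow> (nat \<Rightarrow> complex) \<Rightarrow> (nat \<Rightarrow> complex) \<Rightarrow> complex mat" where
  "Bmat n x y c = mat n n (\<lambda>(i, j).
     if i = 0 then (if j = 0 then x 1 else c j)
     else if j = 0 then (if i = 1 then 1 else 0)
     else if j = n - 1 then (-1) ^ (n - i + 1) * y (n - i)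
     else if i = j + 1 then 1 else 0)"

definition minor_sum :: "nat \<Rightarrow> complex mat \<Rightarrow> nat \<Rightarrow> complex" where
  "minor_sum n A j = (\<Sum>I \<in> {I. I \<subseteq> {0..<n} \<and> card I = j \<and> 0 \<in> I}. det (submatrix A I I))"

end

theory Submission
  imports Defs
begin

text \<open>
  Expand every principal minor of B by the Leibniz formula.  Apart
  from its first row, B has nonzero entries only on the subdiagonal and in the
  last column, so a permutation with a nonzero term moves each nonzero index one
  step down or to the last index m = n - 1.  Such a permutation of a set I
  containing 0 is a cycle on an initial interval 0..q times a cycle on a final
  interval p..m.  For a (k+1)-set, p is determined by q, and the term of this
  double cycle is (-1)^q a_q y_(k-q), where a is the first row of B and y_0 := 1.
  Hence the sum of the principal (k+1)-minors through the first index is the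
  alternating convolution of a with y.  Setting it equal to x_(k+1) for
  k = 1..n-1 gives a triangular linear system in the free entries c_1..c_(n-1);
  its unique solution is computed by a recursion that visibly produces
  polynomials in x and y.
\<close>

lemma pick_bij_betw:
  assumes "finite I"
  shows "bij_betw (pick I) {0..<card I} I"
proof -
  have inj: "inj_on (pick I) {0..<card I}"
  proof (rule inj_onI, rule ccontr)
    fix a b
    assume "a \<in> {0..<card I}" "b \<in> {0..<card I}" "pick I a = pick I b" "a \<noteq> b"
    then show False using pick_mono_le[of a I b] pick_mono_le[of b I a] by (auto simp: neq_iff)
  qed
  have sub: "pick I ` {0..<card I} \<subseteq> I" using pick_in_set_le by auto
  have "card (pick I ` {0..<card I}) = card I" by (simp add: card_image[OF inj])
  then have "pick I ` {0..<card I} = I" using card_subset_eq[OF assms sub] by simp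
  with inj show ?thesis by (simp add: bij_betw_def)
qed

definition perm_term :: "'a::comm_ring_1 mat \<Rightarrow> nat set \<Rightarrow> (nat \<Rightarrow> nat) \<Rightarrow> 'a" where
  "perm_term A I \<sigma> = of_int (sign \<sigma>) * (\<Prod>i\<in>I. A $$ (i, \<sigma> i))"

lemma det_submatrix_perm:
  fixes A :: "'a::comm_ring_1 mat"
  assumes A: "A \<in> carrier_mat N N" and I: "I \<subseteq> {0..<N}"
  shows "det (submatrix A I I) = (\<Sum>\<sigma>\<in>{\<sigma>. \<sigma> permutes I}. perm_term A I \<sigma>)"
proof -
  define k where "k = card I"
  define f where "f = pick I"
  have bij: "bij_betw f {0..<k} I"
    unfolding f_def k_def using I by (intro pick_bij_betw) (auto intro: finite_subset)
  have rows: "{i. i < dim_row A \<and> i \<in> I} = I" "{i. i < dim_col A \<and> i \<in> I} = I"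
    using A I by auto
  have S: "submatrix A I I \<in> carrier_mat k k"
    unfolding k_def carrier_mat_def by (simp add: dim_submatrix rows)
  have S_entry: "submatrix A I I $$ (a, b) = A $$ (f a, f b)" if "a < k" "b < k" for a b
    using that submatrix_index[of a A I b I] rows unfolding f_def k_def by simp
  define \<Phi> where "\<Phi> = (\<lambda>\<tau> i. if i \<in> I then f (\<tau> (inv_into {0..<k} f i)) else i)"
  have bij\<Phi>: "bij_betw \<Phi> {\<tau>. \<tau> permutes {0..<k}} {\<sigma>. \<sigma> permutes I}"
    unfolding \<Phi>_def by (rule bij_betw_permutations[OF bij])
  have term_eq: "of_int (sign \<tau>) * (\<Prod>a=0..<k. submatrix A I I $$ (a, \<tau> a)) = perm_term A I (\<Phi> \<tau>)"
    if \<tau>: "\<tau> permutes {0..<k}" for \<tau>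
  proof -
    have fI: "f ` {0..<k} = I" using bij by (simp add: bij_betw_def)
    have "\<Phi> \<tau> = map_permutation {0..<k} f \<tau>"
      unfolding \<Phi>_def map_permutation_def restrict_id_def fI by (auto simp: fun_eq_iff)
    then have sign_eq: "sign (\<Phi> \<tau>) = sign \<tau>"
      using sign_map_permutation[of f "{0..<k}" \<tau>] bij \<tau> by (simp add: bij_betw_def)
    have \<Phi>_f: "\<Phi> \<tau> (f a) = f (\<tau> a)" if "a < k" for a
      using bij that unfolding \<Phi>_def by (auto simp: bij_betw_def)
    have "(\<Prod>i\<in>I. A $$ (i, \<Phi> \<tau> i)) = (\<Prod>a\<in>{0..<k}. A $$ (f a, \<Phi> \<tau> (f a)))"
      by (rule prod.reindex_bij_betw[OF bij, symmetric])
    also have "\<dots> = (\<Prod>a=0..<k. submatrix A I I $$ (a, \<tau> a))"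
      using permutes_in_image[OF \<tau>] by (intro prod.cong) (auto simp: \<Phi>_f S_entry)
    finally show ?thesis unfolding perm_term_def sign_eq by simp
  qed
  have "det (submatrix A I I) =
      (\<Sum>\<tau>\<in>{\<tau>. \<tau> permutes {0..<k}}. of_int (sign \<tau>) * (\<Prod>a=0..<k. submatrix A I I $$ (a, \<tau> a)))"
    by (rule det_def'[OF S])
  also have "\<dots> = (\<Sum>\<tau>\<in>{\<tau>. \<tau> permutes {0..<k}}. perm_term A I (\<Phi> \<tau>))"
    by (intro sum.cong) (auto simp: term_eq)
  also have "\<dots> = (\<Sum>\<sigma>\<in>{\<sigma>. \<sigma> permutes I}. perm_term A I \<sigma>)"
    by (rule sum.reindex_bij_betw[OF bij\<Phi>])
  finally show ?thesis .
qed

text \<open>The cycle on the interval a..b sending a to b and every other i to i - 1;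
  it is the identity when a > b.\<close>
definition cyc :: "nat \<Rightarrow> nat \<Rightarrow> nat \<Rightarrow> nat" where
  "cyc a b i = (if a \<le> i \<and> i \<le> b then (if i = a then b else i - 1) else i)"

lemma cyc_Suc: "a \<le> b \<Longrightarrow> cyc a (Suc b) = Transposition.transpose b (Suc b) \<circ> cyc a b"
  by (auto simp: cyc_def Transposition.transpose_def fun_eq_iff)

lemma cyc_permutes_sign: "cyc a b permutes {a..b} \<and> sign (cyc a b) = (-1) ^ (b - a)"
proof (cases "a \<le> b")
  case False
  then have "cyc a b = id" by (auto simp: cyc_def fun_eq_iff)
  then show ?thesis using False by (simp add: permutes_id sign_id)
next
  case True
  then obtain d where b: "b = a + d" using le_Suc_ex by blast
  have "cyc a (a + d) permutes {a..a + d} \<and> sign (cyc a (a + d)) = (-1) ^ d"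
  proof (induction d)
    case 0
    have "cyc a a = id" by (auto simp: cyc_def fun_eq_iff)
    then show ?case by (metis add_0_right permutes_id power_0 sign_id)
  next
    case (Suc d)
    have perm: "cyc a (a + d) permutes {a..Suc (a + d)}"
      using Suc.IH by (auto intro: permutes_subset)
    have swap: "Transposition.transpose (a + d) (Suc (a + d)) permutes {a..Suc (a + d)}"
      by (intro permutes_swap_id) auto
    have eq: "cyc a (Suc (a + d)) = Transposition.transpose (a + d) (Suc (a + d)) \<circ> cyc a (a + d)"
      by (rule cyc_Suc) simp
    have "sign (cyc a (Suc (a + d))) = - sign (cyc a (a + d))"
      unfolding eq
      by (simp add: sign_compose[OF permutation_swap_id permutes_imp_permutation[OF _ perm]] sign_swap_id)
    then show ?case using permutes_compose[OF perm swap] Suc.IH unfolding eq[symmetric] by simp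
  qed
  then show ?thesis using b by simp
qed

lemma cyc_outside: "i < a \<or> b < i \<Longrightarrow> cyc a b i = i"
  by (auto simp: cyc_def)

lemma cyc_in_range: "i \<in> {a..b} \<Longrightarrow> cyc a b i \<in> {a..b}"
  by (auto simp: cyc_def)

lemma double_cycle_permutes_sign:
  assumes "q < p"
  shows "(cyc 0 q \<circ> cyc p m) permutes ({0..q} \<union> {p..m})
    \<and> sign (cyc 0 q \<circ> cyc p m) = (-1) ^ q * (-1) ^ (m - p)"
proof -
  have low: "cyc 0 q permutes {0..q}" and high: "cyc p m permutes {p..m}"
    using cyc_permutes_sign by blast+
  have "sign (cyc 0 q \<circ> cyc p m) = sign (cyc 0 q) * sign (cyc p m)"
    using low high by (intro sign_compose permutes_imp_permutation) auto
  moreover have "(cyc 0 q \<circ> cyc p m) permutes ({0..q} \<union> {p..m})"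
    using low high by (intro permutes_compose) (auto intro: permutes_subset)
  ultimately show ?thesis using cyc_permutes_sign by simp
qed

lemma card_double_interval: "q < p \<Longrightarrow> card ({0..q} \<union> {p..m}) = Suc q + (Suc m - p)"
  by (subst card_Un_disjoint) auto

lemma prod_cycle_subdiagonal:
  fixes f :: "nat \<Rightarrow> nat \<Rightarrow> 'a::comm_monoid_mult"
  assumes sub: "\<And>l. a \<le> l \<Longrightarrow> l < b \<Longrightarrow> f (Suc l) l = 1"
  shows "(\<Prod>i\<in>{a..b}. f i (cyc a b i)) = (if a \<le> b then f a b else 1)"
proof (cases "a \<le> b")
  case True
  have "(\<Prod>i\<in>{Suc a..b}. f i (cyc a b i)) = 1"
  proof (rule prod.neutral, rule ballI)
    fix i assume "i \<in> {Suc a..b}"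
    then obtain l where "i = Suc l" "a \<le> l" "l < b" by (cases i) auto
    then show "f i (cyc a b i) = 1" using sub by (simp add: cyc_def)
  qed
  moreover have "{a..b} = insert a {Suc a..b}" using True by auto
  ultimately show ?thesis using True by (simp add: cyc_def)
qed simp

lemma perm_term_double_cycle:
  fixes A :: "'a::comm_ring_1 mat"
  assumes "q < p" "p \<le> Suc m" and sub: "\<And>l. l < m \<Longrightarrow> A $$ (Suc l, l) = 1"
  shows "perm_term A ({0..q} \<union> {p..m}) (cyc 0 q \<circ> cyc p m) =
    (-1) ^ q * (-1) ^ (m - p) * A $$ (0, q) * (if p \<le> m then A $$ (p, m) else 1)"
proof -
  have low: "cyc 0 q (cyc p m i) = cyc 0 q i" if "i \<in> {0..q}" for i
    using that \<open>q < p\<close> by (simp add: cyc_outside)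
  have high: "cyc 0 q (cyc p m i) = cyc p m i" if "i \<in> {p..m}" for i
    using cyc_in_range[OF that] \<open>q < p\<close> by (simp add: cyc_outside)
  have "(\<Prod>i\<in>{0..q} \<union> {p..m}. A $$ (i, (cyc 0 q \<circ> cyc p m) i)) =
      (\<Prod>i\<in>{0..q}. A $$ (i, (cyc 0 q \<circ> cyc p m) i)) * (\<Prod>i\<in>{p..m}. A $$ (i, (cyc 0 q \<circ> cyc p m) i))"
    using \<open>q < p\<close> by (intro prod.union_disjoint) auto
  also have "\<dots> = (\<Prod>i\<in>{0..q}. A $$ (i, cyc 0 q i)) * (\<Prod>i\<in>{p..m}. A $$ (i, cyc p m i))"
    by (intro arg_cong2[where f = "(*)"] prod.cong) (simp_all add: low high)
  also have "(\<Prod>i\<in>{0..q}. A $$ (i, cyc 0 q i)) = A $$ (0, q)"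
  proof -
    have "A $$ (Suc l, l) = 1" if "l < q" for l using sub that assms(1,2) by simp
    then show ?thesis using prod_cycle_subdiagonal[of 0 q "\<lambda>i j. A $$ (i, j)"] by simp
  qed
  also have "(\<Prod>i\<in>{p..m}. A $$ (i, cyc p m i)) = (if p \<le> m then A $$ (p, m) else 1)"
    using prod_cycle_subdiagonal[of p m "\<lambda>i j. A $$ (i, j)"] sub by simp
  finally show ?thesis
    unfolding perm_term_def using double_cycle_permutes_sign[OF \<open>q < p\<close>] by simp
qed

lemma interval_closed:
  fixes J :: "nat set"
  assumes "a \<in> J" and step: "\<And>l. a \<le> l \<Longrightarrow> l < b \<Longrightarrow> l \<in> J \<Longrightarrow> Suc l \<in> J"
  shows "{a..b} \<subseteq> J"
proof
  fix i assume "i \<in> {a..b}"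
  then obtain d where i: "i = a + d" and "a + d \<le> b" using le_Suc_ex by auto
  moreover have "a + d \<in> J" if "a + d \<le> b" for d
    using that
  proof (induction d)
    case 0
    then show ?case using \<open>a \<in> J\<close> by simp
  next
    case (Suc d)
    then show ?case using step[of "a + d"] by simp
  qed
  ultimately show "i \<in> J" by simp
qed

lemma pattern_step:
  fixes \<sigma> :: "nat \<Rightarrow> nat"
  assumes perm: "\<sigma> permutes I"
    and pattern: "\<And>i. i \<in> I \<Longrightarrow> i = 0 \<or> \<sigma> i = m \<or> Suc (\<sigma> i) = i"
    and k: "k \<in> I" "k \<noteq> \<sigma> 0" "k \<noteq> m"
  shows "Suc k \<in> I \<and> \<sigma> (Suc k) = k"
proof -
  have "k \<in> \<sigma> ` I" using k(1) permutes_image[OF perm] by simp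
  then obtain i where i: "i \<in> I" "\<sigma> i = k" by blast
  have "i \<noteq> 0" using i(2) k(2) by metis
  moreover have "\<sigma> i \<noteq> m" using i(2) k(3) by simp
  ultimately have "Suc k = i" using pattern[OF i(1)] i(2) by simp
  then show ?thesis using i by simp
qed

lemma double_cycle_eq:
  fixes \<sigma> :: "nat \<Rightarrow> nat"
  assumes perm: "\<sigma> permutes ({0..q} \<union> {p..m})" and "q < p"
    and first: "\<sigma> 0 = q" and last: "p \<le> m \<Longrightarrow> \<sigma> p = m"
    and down: "\<And>i. i \<in> {0<..q} \<union> {p<..m} \<Longrightarrow> \<sigma> i = i - 1"
  shows "\<sigma> = cyc 0 q \<circ> cyc p m"
proof
  fix i
  have "i = 0 \<or> i \<in> {0<..q} \<or> i \<in> {p<..m} \<or> (i = p \<and> p \<le> m) \<or> i \<notin> {0..q} \<union> {p..m}"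
    by (simp only: atLeastAtMost_iff greaterThanAtMost_iff Un_iff) arith
  then consider "i = 0" | "i \<in> {0<..q}" | "i \<in> {p<..m}" | "i = p" "p \<le> m"
    | "i \<notin> {0..q} \<union> {p..m}"
    by blast
  then show "\<sigma> i = (cyc 0 q \<circ> cyc p m) i"
  proof cases
    case 1
    then show ?thesis using first \<open>q < p\<close> by (simp add: cyc_def)
  next
    case 2
    then have "cyc p m i = i" using \<open>q < p\<close> by (simp add: cyc_outside)
    then show ?thesis using down[of i] 2 by (simp add: cyc_def)
  next
    case 3
    then have "cyc p m i = i - 1" by (simp add: cyc_def)
    moreover have "cyc 0 q (i - 1) = i - 1" using 3 \<open>q < p\<close> by (intro cyc_outside) auto
    ultimately show ?thesis using down[of i] 3 by simp
  next
    case 4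
    then show ?thesis using last \<open>q < p\<close> by (simp add: cyc_def)
  next
    case 5
    then have "cyc p m i = i" "cyc 0 q i = i" by (auto intro: cyc_outside)
    then show ?thesis using permutes_not_in[OF perm 5] by simp
  qed
qed

lemma pattern_classification:
  fixes \<sigma> :: "nat \<Rightarrow> nat"
  assumes perm: "\<sigma> permutes I" and sub: "I \<subseteq> {0..m}" and "0 \<in> I"
    and pattern: "\<And>i. i \<in> I \<Longrightarrow> i = 0 \<or> \<sigma> i = m \<or> Suc (\<sigma> i) = i"
  shows "\<exists>q p. q < p \<and> p \<le> Suc m \<and> I = {0..q} \<union> {p..m} \<and> \<sigma> = cyc 0 q \<circ> cyc p m"
proof -
  define q where "q = \<sigma> 0"
  note step = pattern_step[OF perm pattern, folded q_def]
  have "q \<in> I" using perm \<open>0 \<in> I\<close> by (simp add: q_def permutes_in_image)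
  then have "q \<le> m" using sub by auto
  have low: "{0..q} \<subseteq> I"
  proof (rule interval_closed[OF \<open>0 \<in> I\<close>])
    fix l assume "l < q" "l \<in> I"
    then show "Suc l \<in> I" using step[of l] \<open>q \<le> m\<close> by simp
  qed
  define R where "R = I - {0..q}"
  define p where "p = (if R = {} then Suc m else Min R)"
  have "finite R" using sub unfolding R_def by (auto intro: finite_subset)
  have R_sub: "R \<subseteq> {p..m}" and "q < p" and "p \<le> Suc m"
  proof -
    have "R \<subseteq> {p..m} \<and> q < p \<and> p \<le> Suc m"
    proof (cases "R = {}")
      case True then show ?thesis using \<open>q \<le> m\<close> by (simp add: p_def)
    next
      case False
      have "Min R \<in> R" using \<open>finite R\<close> False by (rule Min_in)
      moreover have "\<forall>r\<in>R. Min R \<le> r" using \<open>finite R\<close> by simp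
      ultimately show ?thesis using False sub unfolding p_def R_def by auto
    qed
    then show "R \<subseteq> {p..m}" "q < p" "p \<le> Suc m" by auto
  qed
  have high: "{p..m} \<subseteq> I"
  proof (cases "R = {}")
    case False
    then have "p \<in> I" using \<open>finite R\<close> Min_in unfolding p_def R_def by auto
    then show ?thesis
    proof (rule interval_closed)
      fix l assume "p \<le> l" "l < m" "l \<in> I"
      then show "Suc l \<in> I" using step[of l] \<open>q < p\<close> by simp
    qed
  qed (simp add: p_def)
  have I_eq: "I = {0..q} \<union> {p..m}" using low high R_sub unfolding R_def by auto
  have down: "\<sigma> i = i - 1" if "i \<in> {0<..q} \<union> {p<..m}" for i
  proof -
    have "i - 1 \<in> I" "i - 1 \<noteq> q" "i - 1 \<noteq> m" "Suc (i - 1) = i"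
      using that I_eq \<open>q < p\<close> \<open>q \<le> m\<close> by auto
    then show ?thesis using step[of "i - 1"] by simp
  qed
  have last: "\<sigma> p = m" if "p \<le> m"
  proof (rule ccontr)
    assume "\<sigma> p \<noteq> m"
    moreover have "p \<in> I" "p \<noteq> 0" using that I_eq \<open>q < p\<close> by auto
    ultimately have "Suc (\<sigma> p) = p" using pattern[of p] by simp
    moreover have "\<sigma> p \<in> I" using perm \<open>p \<in> I\<close> by (simp add: permutes_in_image)
    ultimately have "\<sigma> p = q" using I_eq \<open>q < p\<close> by auto
    then have "\<sigma> p = \<sigma> 0" by (simp add: q_def)
    then show False using permutes_inj[OF perm] \<open>p \<noteq> 0\<close> by (auto dest: injD)
  qed
  have "\<sigma> = cyc 0 q \<circ> cyc p m"
    by (rule double_cycle_eq[OF _ \<open>q < p\<close> _ last down]) (use perm I_eq q_def in simp_all)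
  then show ?thesis using \<open>q < p\<close> \<open>p \<le> Suc m\<close> I_eq by blast
qed

lemma Bmat_carrier: "Bmat n x y c \<in> carrier_mat n n"
  unfolding Bmat_def by simp

lemma Bmat_first_row: "l < n \<Longrightarrow> Bmat n x y c $$ (0, l) = (c(0 := x 1)) l"
  unfolding Bmat_def by simp

lemma Bmat_subdiagonal: "Suc l < n \<Longrightarrow> Bmat n x y c $$ (Suc l, l) = 1"
  unfolding Bmat_def by simp

lemma Bmat_last_column:
  "0 < i \<Longrightarrow> i < n \<Longrightarrow> Bmat n x y c $$ (i, n - 1) = (-1) ^ (n - i + 1) * y (n - i)"
  unfolding Bmat_def by simp

lemma Bmat_support:
  "i < n \<Longrightarrow> l < n \<Longrightarrow> Bmat n x y c $$ (i, l) \<noteq> 0 \<Longrightarrow> i = 0 \<or> l = n - 1 \<or> Suc l = i"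
  unfolding Bmat_def by (auto split: if_splits)

lemma minus_one_power_cancel: "(-1::complex) ^ d * (-1) ^ (d + 2) = 1"
  by (simp add: power_add power_mult_distrib[symmetric])

text \<open>The double cycle on 0..q and p..n-1 contributes (-1)^q a_q y_(n-p): the
  sign of the second cycle cancels the sign in the last column of B.  For p = n
  the second cycle is empty and the padding value y_0 = 1 appears.\<close>
lemma Bmat_double_cycle_term:
  assumes "q < p" "p \<le> n"
  shows "perm_term (Bmat n x y c) ({0..q} \<union> {p..n - 1}) (cyc 0 q \<circ> cyc p (n - 1)) =
    (-1) ^ q * (c(0 := x 1)) q * (y(0 := 1)) (n - p)"
proof -
  define B where "B = Bmat n x y c"
  have last_col: "(-1) ^ (n - 1 - p) * (if p \<le> n - 1 then B $$ (p, n - 1) else 1) = (y(0 := 1)) (n - p)"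
  proof (cases "p \<le> n - 1")
    case True
    then have "0 < p" "p < n" and exp: "n - p + 1 = (n - 1 - p) + 2" using assms by arith+
    have "B $$ (p, n - 1) = (-1) ^ (n - p + 1) * y (n - p)"
      unfolding B_def by (rule Bmat_last_column[OF \<open>0 < p\<close> \<open>p < n\<close>])
    moreover have "(-1::complex) ^ (n - 1 - p) * (-1) ^ (n - p + 1) = 1"
      unfolding exp by (rule minus_one_power_cancel)
    ultimately have "(-1) ^ (n - 1 - p) * (if p \<le> n - 1 then B $$ (p, n - 1) else 1) = y (n - p)"
      unfolding if_P[OF True] by (simp only: mult.assoc[symmetric] mult_1)
    then show ?thesis using \<open>p < n\<close> by simp
  next
    case False
    then show ?thesis using assms by simp
  qed
  have first_row: "B $$ (0, q) = (c(0 := x 1)) q"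
    unfolding B_def using assms by (intro Bmat_first_row) simp
  have "perm_term B ({0..q} \<union> {p..n - 1}) (cyc 0 q \<circ> cyc p (n - 1)) =
      (-1) ^ q * (-1) ^ (n - 1 - p) * B $$ (0, q) * (if p \<le> n - 1 then B $$ (p, n - 1) else 1)"
    using assms by (intro perm_term_double_cycle) (auto simp: B_def Bmat_subdiagonal)
  also have "\<dots> = (-1) ^ q * B $$ (0, q) * ((-1) ^ (n - 1 - p) * (if p \<le> n - 1 then B $$ (p, n - 1) else 1))"
    by (simp only: ac_simps)
  also have "\<dots> = (-1) ^ q * (c(0 := x 1)) q * (y(0 := 1)) (n - p)"
    using last_col first_row by simp
  finally show ?thesis unfolding B_def .
qed

definition minor_pairs :: "nat \<Rightarrow> nat \<Rightarrow> (nat set \<times> (nat \<Rightarrow> nat)) set" where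
  "minor_pairs n j = (SIGMA I:{I. I \<subseteq> {0..<n} \<and> card I = j \<and> 0 \<in> I}. {\<sigma>. \<sigma> permutes I})"

lemma finite_minor_pairs: "finite (minor_pairs n j)"
proof -
  have "finite {I. I \<subseteq> {0..<n} \<and> card I = j \<and> 0 \<in> I}" by (rule finite_subset[of _ "Pow {0..<n}"]) auto
  then show ?thesis unfolding minor_pairs_def
    by (intro finite_SigmaI finite_permutations) (auto intro: finite_subset)
qed

lemma minor_sum_perm_expansion:
  assumes "A \<in> carrier_mat n n"
  shows "minor_sum n A j = (\<Sum>(I, \<sigma>)\<in>minor_pairs n j. perm_term A I \<sigma>)"
proof -
  have "minor_sum n A j =
      (\<Sum>I\<in>{I. I \<subseteq> {0..<n} \<and> card I = j \<and> 0 \<in> I}. \<Sum>\<sigma>\<in>{\<sigma>. \<sigma> permutes I}. perm_term A I \<sigma>)"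
    unfolding minor_sum_def by (intro sum.cong) (auto simp: det_submatrix_perm[OF assms])
  also have "\<dots> = (\<Sum>(I, \<sigma>)\<in>minor_pairs n j. perm_term A I \<sigma>)"
    unfolding minor_pairs_def
    by (rule sum.Sigma) (auto intro: finite_subset[of _ "Pow {0..<n}"] finite_permutations finite_subset)
  finally show ?thesis .
qed

text \<open>Only the double cycles with cardinality j = k + 1 contribute; the size
  condition fixes p = q + n - k.\<close>
lemma Bmat_nonzero_pairs:
  assumes "k < n" and mem: "(I, \<sigma>) \<in> minor_pairs n (Suc k)"
    and nonzero: "perm_term (Bmat n x y c) I \<sigma> \<noteq> 0"
  shows "\<exists>q\<le>k. (I, \<sigma>) = ({0..q} \<union> {q + n - k..n - 1}, cyc 0 q \<circ> cyc (q + n - k) (n - 1))"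
proof -
  have I: "I \<subseteq> {0..<n}" "card I = Suc k" "0 \<in> I" and perm: "\<sigma> permutes I"
    using mem by (auto simp: minor_pairs_def)
  have "finite I" using I(1) by (auto intro: finite_subset)
  then have factors: "Bmat n x y c $$ (i, \<sigma> i) \<noteq> 0" if "i \<in> I" for i
    using nonzero that unfolding perm_term_def by auto
  have pattern: "i = 0 \<or> \<sigma> i = n - 1 \<or> Suc (\<sigma> i) = i" if "i \<in> I" for i
  proof -
    have "\<sigma> i \<in> I" using perm that by (simp add: permutes_in_image)
    then have "i < n" "\<sigma> i < n" using that I(1) by auto
    then show ?thesis using Bmat_support factors[OF that] by blast
  qed
  obtain q p where "q < p" "p \<le> Suc (n - 1)" and I_eq: "I = {0..q} \<union> {p..n - 1}"
    and \<sigma>_eq: "\<sigma> = cyc 0 q \<circ> cyc p (n - 1)"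
    using pattern_classification[OF perm _ I(3) pattern] I(1) by fastforce
  moreover have "Suc q + (Suc (n - 1) - p) = Suc k"
    using I(2) card_double_interval[OF \<open>q < p\<close>] I_eq by simp
  ultimately have "q \<le> k" "p = q + n - k" using \<open>k < n\<close> by arith+
  then show ?thesis using I_eq \<sigma>_eq by blast
qed

definition alt_conv :: "(nat \<Rightarrow> complex) \<Rightarrow> (nat \<Rightarrow> complex) \<Rightarrow> nat \<Rightarrow> complex" where
  "alt_conv a y k = (\<Sum>q\<le>k. (-1) ^ q * a q * (y(0 := 1)) (k - q))"

lemma minor_sum_Bmat:
  assumes "k < n"
  shows "minor_sum n (Bmat n x y c) (Suc k) = alt_conv (c(0 := x 1)) y k"
proof -
  define B where "B = Bmat n x y c"
  define G where "G = (\<lambda>q. ({0..q} \<union> {q + n - k..n - 1}, cyc 0 q \<circ> cyc (q + n - k) (n - 1)))"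
  have G_in: "G ` {..k} \<subseteq> minor_pairs n (Suc k)"
  proof
    fix z assume "z \<in> G ` {..k}"
    then obtain q where "q \<le> k" and z: "z = G q" by auto
    then have "q < q + n - k" "q + n - k \<le> Suc (n - 1)" using assms by arith+
    then show "z \<in> minor_pairs n (Suc k)"
      using double_cycle_permutes_sign card_double_interval \<open>q \<le> k\<close> assms
      unfolding z G_def minor_pairs_def by auto
  qed
  have G_inj: "inj_on G {..k}"
  proof (rule inj_onI)
    fix a b assume "a \<in> {..k}" "b \<in> {..k}" "G a = G b"
    then have "snd (G a) 0 = snd (G b) 0" by simp
    then show "a = b" using \<open>a \<in> {..k}\<close> \<open>b \<in> {..k}\<close> assms by (simp add: G_def cyc_def)
  qed
  have zero: "perm_term B I \<sigma> = 0" if "(I, \<sigma>) \<in> minor_pairs n (Suc k)" "(I, \<sigma>) \<notin> G ` {..k}" for I \<sigma>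
    using Bmat_nonzero_pairs[OF assms that(1)] that(2) unfolding B_def G_def by fastforce
  have "minor_sum n B (Suc k) = (\<Sum>(I, \<sigma>)\<in>minor_pairs n (Suc k). perm_term B I \<sigma>)"
    unfolding B_def by (rule minor_sum_perm_expansion[OF Bmat_carrier])
  also have "\<dots> = (\<Sum>(I, \<sigma>)\<in>G ` {..k}. perm_term B I \<sigma>)"
    by (intro sum.mono_neutral_right[OF finite_minor_pairs G_in]) (auto simp: zero)
  also have "\<dots> = (\<Sum>q\<le>k. perm_term B (fst (G q)) (snd (G q)))"
    by (simp add: sum.reindex[OF G_inj] case_prod_beta)
  also have "\<dots> = alt_conv (c(0 := x 1)) y k"
    unfolding alt_conv_def
  proof (intro sum.cong refl)
    fix q assume "q \<in> {..k}"
    then have "q < q + n - k" "q + n - k \<le> n" "n - (q + n - k) = k - q" using assms by auto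
    then show "perm_term B (fst (G q)) (snd (G q)) = (-1) ^ q * (c(0 := x 1)) q * (y(0 := 1)) (k - q)"
      using Bmat_double_cycle_term[of q "q + n - k" n x y c] unfolding G_def B_def by simp
  qed
  finally show ?thesis unfolding B_def .
qed

lemma alt_conv_split:
  "alt_conv a y k = (-1) ^ k * a k + (\<Sum>q<k. (-1) ^ q * a q * y (k - q))"
proof -
  have "(\<Sum>q<k. (-1) ^ q * a q * (y(0 := 1)) (k - q)) = (\<Sum>q<k. (-1) ^ q * a q * y (k - q))"
    by (intro sum.cong) auto
  then show ?thesis unfolding alt_conv_def lessThan_Suc_atMost[symmetric] by simp
qed

lemma sign_solve: "(s::'a::comm_ring_1) * s = 1 \<Longrightarrow> s * a = w \<longleftrightarrow> a = s * w"
  by (metis mult.assoc mult_1)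

lemma alt_conv_eq_iff:
  "alt_conv a y k = v \<longleftrightarrow> a k = (-1) ^ k * (v - (\<Sum>q<k. (-1) ^ q * a q * y (k - q)))"
    (is "_ \<longleftrightarrow> _ = ?s * (v - ?S)")
proof -
  have sq: "?s * ?s = 1" by (simp add: power_mult_distrib[symmetric])
  have "alt_conv a y k = v \<longleftrightarrow> ?s * a k = v - ?S"
    unfolding alt_conv_split by (simp only: eq_diff_eq)
  also have "\<dots> \<longleftrightarrow> a k = ?s * (v - ?S)"
    by (rule sign_solve[OF sq])
  finally show ?thesis .
qed

fun sol :: "(nat \<Rightarrow> complex) \<Rightarrow> (nat \<Rightarrow> complex) \<Rightarrow> nat \<Rightarrow> complex" where
  "sol x y k = (if k = 0 then x 1
     else (-1) ^ k * (x (Suc k) - (\<Sum>q<k. (-1) ^ q * sol x y q * y (k - q))))"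

declare sol.simps [simp del]

lemma sol_0: "sol x y 0 = x 1"
  by (simp add: sol.simps)

lemma sol_pos:
  "0 < k \<Longrightarrow> sol x y k = (-1) ^ k * (x (Suc k) - (\<Sum>q<k. (-1) ^ q * sol x y q * y (k - q)))"
  using sol.simps[of x y k] by simp

lemma alt_conv_sol: "0 < k \<Longrightarrow> alt_conv (sol x y) y k = x (Suc k)"
  unfolding alt_conv_eq_iff by (rule sol_pos)

lemma alt_conv_unique:
  assumes "a 0 = x 1" and eqs: "\<And>k. 0 < k \<Longrightarrow> k \<le> N \<Longrightarrow> alt_conv a y k = x (Suc k)"
  shows "k \<le> N \<Longrightarrow> a k = sol x y k"
proof (induction k rule: less_induct)
  case (less k)
  show ?case
  proof (cases "k = 0")
    case True
    then show ?thesis using assms(1) by (simp add: sol_0)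
  next
    case False
    then have "alt_conv a y k = x (Suc k)" using eqs less.prems by simp
    then have "a k = (-1) ^ k * (x (Suc k) - (\<Sum>q<k. (-1) ^ q * a q * y (k - q)))"
      unfolding alt_conv_eq_iff .
    also have "\<dots> = (-1) ^ k * (x (Suc k) - (\<Sum>q<k. (-1) ^ q * sol x y q * y (k - q)))"
      using less by (intro arg_cong2[where f = "\<lambda>u v. u * (x (Suc k) - v)"] sum.cong) auto
    also have "\<dots> = sol x y k" using False by (simp add: sol_pos)
    finally show ?thesis .
  qed
qed

lemma poly_xy_sum:
  "(\<And>r. r < (K::nat) \<Longrightarrow> poly_xy n (f r)) \<Longrightarrow> poly_xy n (\<lambda>x y. \<Sum>r<K. f r x y)"
proof (induction K)
  case 0
  then show ?case using poly_xy.const[of n 0] by simp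
next
  case (Suc K)
  then have "poly_xy n (\<lambda>x y. (\<Sum>r<K. f r x y) + f K x y)" by (intro poly_xy.add) auto
  then show ?case by simp
qed

lemma poly_xy_diff:
  assumes "poly_xy n f" "poly_xy n g"
  shows "poly_xy n (\<lambda>x y. f x y - g x y)"
proof -
  have "poly_xy n (\<lambda>x y. f x y + (-1) * g x y)"
    using assms by (intro poly_xy.add poly_xy.mult poly_xy.const)
  then show ?thesis by simp
qed

lemma poly_xy_sol: "0 < n \<Longrightarrow> k < n \<Longrightarrow> poly_xy n (\<lambda>x y. sol x y k)"
proof (induction k rule: less_induct)
  case (less k)
  show ?case
  proof (cases "k = 0")
    case True
    then show ?thesis using poly_xy.var_x[of 1 n] less.prems by (simp add: sol_0)
  next
    case False
    have sum: "poly_xy n (\<lambda>x y. \<Sum>q<k. (-1) ^ q * sol x y q * y (k - q))"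
      using less False by (intro poly_xy_sum poly_xy.mult poly_xy.const poly_xy.var_y) auto
    have "poly_xy n (\<lambda>x y. (-1) ^ k * (x (Suc k) - (\<Sum>q<k. (-1) ^ q * sol x y q * y (k - q))))"
      using less.prems by (intro poly_xy.mult poly_xy.const poly_xy_diff sum poly_xy.var_x) auto
    then show ?thesis using False by (simp add: sol_pos)
  qed
qed

theorem lemma2p3:
  fixes n :: nat
  assumes "n \<ge> 2"
  shows "\<exists>p :: nat \<Rightarrow> (nat \<Rightarrow> complex) \<Rightarrow> (nat \<Rightarrow> complex) \<Rightarrow> complex.
           (\<forall>k \<in> {1..n-1}. poly_xy n (p k)) \<and>
           (\<forall>x y. \<forall>j \<in> {2..n}. minor_sum n (Bmat n x y (\<lambda>k. p k x y)) j = x j) \<and>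
           (\<forall>x y c. (\<forall>j \<in> {2..n}. minor_sum n (Bmat n x y c) j = x j)
               \<longrightarrow> (\<forall>k \<in> {1..n-1}. c k = p k x y))"
proof (intro exI[of _ "\<lambda>k x y. sol x y k"] conjI ballI allI impI)
  fix k assume "k \<in> {1..n - 1}"
  then show "poly_xy n (\<lambda>x y. sol x y k)" using assms by (intro poly_xy_sol) auto
next
  fix x y and j :: nat assume "j \<in> {2..n}"
  then obtain k where j: "j = Suc k" "0 < k" "k < n" by (cases j) auto
  have "(sol x y)(0 := x 1) = sol x y" by (auto simp: sol_0)
  then show "minor_sum n (Bmat n x y (\<lambda>k. sol x y k)) j = x j"
    using minor_sum_Bmat[OF \<open>k < n\<close>] alt_conv_sol[OF \<open>0 < k\<close>] j(1) by simp
next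
  fix x y c k
  assume eqs: "\<forall>j\<in>{2..n}. minor_sum n (Bmat n x y c) j = x j" and "k \<in> {1..n - 1}"
  have "(c(0 := x 1)) k = sol x y k"
  proof (rule alt_conv_unique[where N = "n - 1"])
    fix l assume "0 < l" "l \<le> n - 1"
    then show "alt_conv (c(0 := x 1)) y l = x (Suc l)"
      using eqs minor_sum_Bmat[of l n x y c] by auto
  qed (use \<open>k \<in> {1..n - 1}\<close> in auto)
  then show "c k = sol x y k" using \<open>k \<in> {1..n - 1}\<close> by simp
qed

end
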